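(* Let $n\geq 1$ be an integer and let $a,b,x\in\mathbb{C}$. Then $$\sum_{k=0}^{n}\binom{n+k}{2k}C_k x^{2k}(b-x^2)^{n-k}=b\sum_{k=0}^{n-1}\binom{n-1}{k}M_k^{(a,b)}x^k(x^2-ax+b)^{n-1-k},$$ where $C_k$ is the $k$-th Catalan number and $M_k^{(a,b)}$ is the $(a,b)$-Motzkin number defined in the context.
   Context: Let $C_k=\frac{1}{k+1}\binom{2k}{k}$ be the Catalan numbers. For an integer $m\geq 0$ and $a,b\in\mathbb{C}$, the $(a,b)$-Motzkin number is $$M_m^{(a,b)}=\sum_{k=0}^{\lfloor m/2\rfloor}\binom{m}{2k}C_k a^{m-2k}b^k .$$ In particular $M_0^{(a,b)}=1$. *)

theory Defs
  imports Complex_Main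
begin

definition catalan :: "nat \<Rightarrow> nat" where
  "catalan k = ((2*k) choose k) div (k+1)"

definition motzkin :: "complex \<Rightarrow> complex \<Rightarrow> nat \<Rightarrow> complex" where
  "motzkin a b m = (\<Sum>k=0..m div 2. of_nat (m choose (2*k)) * of_nat (catalan k) * a^(m-2*k) * b^k)"

end

theory Submission
  imports Defs
begin

text \<open>Both sides equal the Narayana polynomial
  \<open>\<Sum>t<n. (n choose t) (n choose t+1) / n \<cdot> x\<^sup>2\<^sup>t b\<^sup>n\<^sup>-\<^sup>t\<close>.
  On the left, \<open>(n+k choose 2k) C\<^sub>k = (n choose k) (n+k choose k+1) / n\<close>; expanding
  \<open>(n+k choose k+1)\<close> by Vandermonde and summing over \<open>k\<close> collapses the binomial expansion of
  \<open>(x\<^sup>2 + (b - x\<^sup>2))\<^sup>n\<^sup>-\<^sup>t\<close>. On the right, inserting the definition of the Motzkin numbers and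
  summing over \<open>k\<close> turns the sum into \<open>\<Sum>j. (m choose 2j) C\<^sub>j (x\<^sup>2b)\<^sup>j (x\<^sup>2 + b)\<^sup>m\<^sup>-\<^sup>2\<^sup>j\<close>
  with \<open>m = n - 1\<close>, because \<open>ax + (x\<^sup>2 - ax + b) = x\<^sup>2 + b\<close>; a trinomial expansion of
  \<open>(x\<^sup>2b)\<^sup>j (x\<^sup>2 + b)\<^sup>m\<^sup>-\<^sup>2\<^sup>j\<close> and a second Vandermonde summation give the same Narayana polynomial.\<close>

lemma sum_choose_mult_choose_power:
  fixes p v :: "'a::comm_semiring_1"
  shows "(\<Sum>k\<le>m. of_nat (m choose k) * of_nat (k choose t) * p^(k-t) * v^(m-k))
       = of_nat (m choose t) * (p + v)^(m-t)"
proof (cases "t \<le> m")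
  case False
  then show ?thesis
    by (auto intro!: sum.neutral simp: binomial_eq_0)
next
  case True
  let ?f = "\<lambda>k. of_nat (m choose k) * of_nat (k choose t) * p^(k-t) * v^(m-k) :: 'a"
  have "(\<Sum>k\<le>m. ?f k) = (\<Sum>k\<in>{t..m}. ?f k)"
    by (rule sum.mono_neutral_right) (auto simp: binomial_eq_0)
  also have "\<dots> = (\<Sum>l\<le>m-t. ?f (l+t))"
    using sum.shift_bounds_cl_nat_ivl[of ?f 0 t "m-t"] True by (simp add: atMost_atLeast0)
  also have "\<dots> = (\<Sum>l\<le>m-t. of_nat (m choose t) * (of_nat ((m-t) choose l) * p^l * v^(m-t-l)))"
  proof (rule sum.cong[OF refl])
    fix l assume "l \<in> {..m-t}"
    then have "(m choose (l+t)) * ((l+t) choose t) = (m choose t) * ((m-t) choose l)"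
      using choose_mult[of t "l+t" m] True by simp
    then have "(of_nat (m choose (l+t)) * of_nat ((l+t) choose t) :: 'a)
             = of_nat (m choose t) * of_nat ((m-t) choose l)"
      by (metis of_nat_mult)
    then show "?f (l+t) = of_nat (m choose t) * (of_nat ((m-t) choose l) * p^l * v^(m-t-l))"
      by (simp add: algebra_simps)
  qed
  also have "\<dots> = of_nat (m choose t) * (p + v)^(m-t)"
    by (simp add: binomial_ring sum_distrib_left)
  finally show ?thesis .
qed

lemma choose_mult_swap:
  assumes "s + l \<le> n"
  shows "(n choose s) * ((n - s) choose l) = (n choose l) * ((n - l) choose s)"
  using choose_mult[of s "s+l" n] choose_mult[of l "s+l" n] binomial_symmetric[of s "s+l"] assms
  by simp

lemma choose_mult_choose_mult_choose:
  assumes "s + j \<le> m - j"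
  shows "(m choose (s+j)) * ((s+j) choose j) * ((m - (s+j)) choose j)
       = (m choose j) * ((m-j) choose j) * ((m - 2*j) choose s)"
proof -
  have "(m choose (s+j)) * ((s+j) choose j) = (m choose j) * ((m-j) choose s)"
    using choose_mult[of j "s+j" m] assms by simp
  moreover have "((m-j) choose s) * ((m-j-s) choose j) = ((m-j) choose j) * ((m-2*j) choose s)"
    using choose_mult_swap[OF assms] by (simp add: diff_diff_add mult_2)
  moreover have "m - (s+j) = m - j - s"
    by simp
  ultimately show ?thesis
    by (metis mult.assoc mult.commute)
qed

lemma sum_choose_trinomial_power:
  fixes p q :: "'a::comm_semiring_1"
  shows "(\<Sum>i\<le>m. of_nat ((m choose i) * (i choose j) * ((m-i) choose j)) * p^i * q^(m-i))
       = of_nat ((m choose j) * ((m-j) choose j)) * (p*q)^j * (p+q)^(m-2*j)"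
proof (cases "2*j \<le> m")
  case False
  then have "(m choose i) * (i choose j) * ((m-i) choose j) = 0" for i
    by auto
  moreover have "(m-j) choose j = 0"
    using False by auto
  ultimately show ?thesis
    by (simp only: of_nat_0 mult_zero_left mult_zero_right sum.neutral_const)
next
  case True
  let ?f = "\<lambda>i. of_nat ((m choose i) * (i choose j) * ((m-i) choose j)) * p^i * q^(m-i) :: 'a"
  have "(\<Sum>i\<le>m. ?f i) = (\<Sum>i\<in>{j..m-j}. ?f i)"
    by (rule sum.mono_neutral_right) (auto simp: binomial_eq_0)
  also have "\<dots> = (\<Sum>s\<le>m-2*j. ?f (s+j))"
    using sum.shift_bounds_cl_nat_ivl[of ?f 0 j "m-2*j"] True by (simp add: atMost_atLeast0)
  also have "\<dots> = (\<Sum>s\<le>m-2*j. of_nat ((m choose j) * ((m-j) choose j))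
                    * (p*q)^j * (of_nat ((m-2*j) choose s) * p^s * q^(m-2*j-s)))"
  proof (rule sum.cong[OF refl])
    fix s assume "s \<in> {..m-2*j}"
    then have s: "s + j \<le> m - j"
      using True by auto
    have "p^(s+j) * q^(m-(s+j)) = (p*q)^j * (p^s * q^(m-2*j-s))"
    proof -
      have "m - (s+j) = j + (m-2*j-s)"
        using s by auto
      then show ?thesis
        by (simp only: power_add power_mult_distrib) (simp only: ac_simps)
    qed
    with choose_mult_choose_mult_choose[OF s]
    show "?f (s+j) = of_nat ((m choose j) * ((m-j) choose j))
                    * (p*q)^j * (of_nat ((m-2*j) choose s) * p^s * q^(m-2*j-s))"
      by (simp only: of_nat_mult mult.assoc) (simp add: algebra_simps)
  qed
  also have "\<dots> = of_nat ((m choose j) * ((m-j) choose j)) * (p*q)^j * (p+q)^(m-2*j)"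
    by (simp add: binomial_ring sum_distrib_left)
  finally show ?thesis .
qed

lemma catalan_mult_Suc: "catalan k * Suc k = (2*k) choose k"
proof -
  have "coprime (Suc k) (Suc (2*k))"
    by (metis add_2_eq_Suc coprime_Suc_left_nat coprime_mult_left_iff
        mult_Suc_right mult_numeral_left_semiring_numeral)
  moreover have "Suc k dvd Suc (2*k) * ((2*k) choose k)"
    unfolding Suc_times_binomial_eq by (rule dvd_triv_right)
  ultimately have "Suc k dvd (2*k) choose k"
    using coprime_dvd_mult_right_iff by blast
  then show ?thesis
    unfolding catalan_def by (metis Suc_eq_plus1 dvd_div_mult_self)
qed

lemma of_nat_catalan:
  "(of_nat (catalan k) :: 'a::field_char_0) = of_nat ((2*k) choose k) / of_nat (Suc k)"
  by (simp add: eq_divide_eq flip: catalan_mult_Suc of_nat_mult del: of_nat_Suc)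

lemma choose_mult_catalan_eq_narayana:
  assumes "n \<ge> 1"
  shows "(of_nat ((n+k) choose (2*k)) * of_nat (catalan k) :: 'a::field_char_0)
       = of_nat (n choose k) * of_nat ((n+k) choose Suc k) / of_nat n"
proof (cases "k \<le> n")
  case False
  then show ?thesis by (simp add: binomial_eq_0)
next
  case True
  obtain m where n: "n = Suc m"
    using assms by (cases n) auto
  have b1: "(of_nat ((n+k) choose (2*k)) :: 'a) = fact (n+k) / (fact (2*k) * fact (n-k))"
    using binomial_fact[of "2*k" "n+k"] True by simp
  have b2: "(of_nat ((2*k) choose k) :: 'a) = fact (2*k) / (fact k * fact k)"
    using binomial_fact[of k "2*k"] by simp
  have b3: "(of_nat (n choose k) :: 'a) = fact n / (fact k * fact (n-k))"
    using binomial_fact[of k n] True by simp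
  have b4: "(of_nat ((n+k) choose Suc k) :: 'a) = fact (n+k) / (fact (Suc k) * fact m)"
    using binomial_fact[of "Suc k" "n+k"] n by simp
  have f: "(fact n :: 'a) = of_nat n * fact m" "(fact (Suc k) :: 'a) = of_nat (Suc k) * fact k"
    using n by simp_all
  show ?thesis
    unfolding of_nat_catalan b1 b2 b3 b4 f using n by (simp add: field_simps del: of_nat_Suc)
qed

lemma choose_mult_catalan_eq_trinomial:
  "(of_nat (m choose (2*j)) * of_nat (catalan j) :: 'a::field_char_0)
     = of_nat ((m choose j) * ((m-j) choose j)) / of_nat (Suc j)"
proof (cases "2*j \<le> m")
  case False
  then show ?thesis by (simp add: binomial_eq_0)
next
  case True
  have b1: "(of_nat (m choose (2*j)) :: 'a) = fact m / (fact (2*j) * fact (m-2*j))"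
    using binomial_fact[of "2*j" m] True by simp
  have b2: "(of_nat ((2*j) choose j) :: 'a) = fact (2*j) / (fact j * fact j)"
    using binomial_fact[of j "2*j"] by simp
  have b3: "(of_nat (m choose j) :: 'a) = fact m / (fact j * fact (m-j))"
    using binomial_fact[of j m] True by simp
  have "j \<le> m - j" "m - j - j = m - 2*j"
    using True by auto
  then have b4: "(of_nat ((m-j) choose j) :: 'a) = fact (m-j) / (fact j * fact (m-2*j))"
    using binomial_fact[of j "m-j"] by simp
  show ?thesis
    unfolding of_nat_catalan of_nat_mult b1 b2 b3 b4 by (simp add: field_simps del: of_nat_Suc)
qed

lemma add_choose_Suc_eq_sum:
  assumes "n > 0"
  shows "(n + k) choose Suc k = (\<Sum>t<n. (k choose t) * (n choose Suc t))"
proof -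
  obtain m where n: "n = Suc m"
    using assms by (cases n) auto
  have "(n + k) choose Suc k = (k + n) choose m"
    using binomial_symmetric[of m "k+n"] n by (simp add: add.commute)
  also have "\<dots> = (\<Sum>t\<le>m. (k choose t) * (n choose (m - t)))"
    by (rule vandermonde[symmetric])
  also have "\<dots> = (\<Sum>t\<le>m. (k choose t) * (n choose Suc t))"
    using binomial_symmetric[of "Suc _" n] n by (intro sum.cong) auto
  finally show ?thesis
    using n lessThan_Suc_atMost by simp
qed

lemma sum_choose_choose_div_Suc:
  assumes "i \<le> m"
  shows "(\<Sum>j\<le>m. of_nat ((i choose j) * ((m-i) choose j)) / of_nat (Suc j) :: 'a::field_char_0)
       = of_nat (Suc m choose Suc i) / of_nat (Suc m - i)"
proof -
  have "(\<Sum>j\<le>m. of_nat ((i choose j) * ((m-i) choose j)) / of_nat (Suc j) :: 'a)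
      = (\<Sum>j\<le>m-i. of_nat ((i choose j) * ((m-i) choose j)) / of_nat (Suc j))"
    by (rule sum.mono_neutral_right) auto
  also have "\<dots> = (\<Sum>j\<le>m-i. of_nat ((i choose j) * (Suc (m-i) choose Suc j)) / of_nat (Suc (m-i)))"
  proof (rule sum.cong[OF refl])
    fix j
    have "(of_nat (Suc (m-i)) * of_nat ((m-i) choose j) :: 'a)
        = of_nat (Suc (m-i) choose Suc j) * of_nat (Suc j)"
      by (simp only: Suc_times_binomial_eq flip: of_nat_mult)
    then show "of_nat ((i choose j) * ((m-i) choose j)) / of_nat (Suc j)
             = (of_nat ((i choose j) * (Suc (m-i) choose Suc j)) / of_nat (Suc (m-i)) :: 'a)"
      by (simp add: field_simps del: of_nat_Suc)
  qed
  also have "\<dots> = of_nat (\<Sum>j\<le>m-i. (i choose j) * (Suc (m-i) choose Suc j)) / of_nat (Suc (m-i))"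
    by (simp add: sum_divide_distrib)
  also have "(\<Sum>j\<le>m-i. (i choose j) * (Suc (m-i) choose Suc j))
           = (\<Sum>j\<le>m-i. (i choose j) * (Suc (m-i) choose (m-i-j)))"
    using binomial_symmetric[of "Suc _" "Suc (m-i)"] by (intro sum.cong) auto
  also have "\<dots> = Suc m choose Suc i"
    using vandermonde[of i "Suc (m-i)" "m-i"] binomial_symmetric[of "m-i" "Suc m"] assms
    by (simp add: Suc_diff_le)
  finally show ?thesis
    using assms by (simp add: Suc_diff_le)
qed

lemma choose_mult_sum_choose_choose_div_Suc:
  assumes "i \<le> m"
  shows "of_nat (m choose i) * (\<Sum>j\<le>m. of_nat ((i choose j) * ((m-i) choose j)) / of_nat (Suc j))
       = (of_nat ((Suc m choose i) * (Suc m choose Suc i)) / of_nat (Suc m) :: 'a::field_char_0)"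
proof -
  have "(Suc m - i) * (Suc m choose i) = Suc m * (m choose i)"
    using binomial_absorb_comp[of "Suc m" i] by simp
  then have "(of_nat (Suc m - i) * of_nat (Suc m choose i) :: 'a) = of_nat (Suc m) * of_nat (m choose i)"
    by (simp only: flip: of_nat_mult)
  moreover have "(of_nat (Suc m - i) :: 'a) \<noteq> 0"
    using assms by (simp only: of_nat_eq_0_iff)
  ultimately show ?thesis
    unfolding sum_choose_choose_div_Suc[OF assms] by (simp add: field_simps del: of_nat_Suc)
qed

definition narayana_poly :: "nat \<Rightarrow> 'a::field_char_0 \<Rightarrow> 'a \<Rightarrow> 'a" where
  "narayana_poly n u b =
     (\<Sum>t<n. of_nat ((n choose t) * (n choose Suc t)) / of_nat n * u^t * b^(n-t))"

lemma catalan_sum_eq_narayana_poly: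
  fixes u b :: "'a::field_char_0"
  assumes "n \<ge> 1"
  shows "(\<Sum>k\<le>n. of_nat ((n+k) choose (2*k)) * of_nat (catalan k) * u^k * (b - u)^(n-k))
       = narayana_poly n u b"
proof -
  have "(\<Sum>k\<le>n. of_nat ((n+k) choose (2*k)) * of_nat (catalan k) * u^k * (b - u)^(n-k))
      = (\<Sum>k\<le>n. \<Sum>t<n. of_nat (n choose Suc t) / of_nat n * u^t *
            (of_nat (n choose k) * of_nat (k choose t) * u^(k-t) * (b - u)^(n-k)))"
  proof (rule sum.cong[OF refl])
    fix k
    have split_power: "u^k * (of_nat (k choose t) * z) = u^t * (of_nat (k choose t) * (u^(k-t) * z))"
      for t z
      by (cases "t \<le> k") (simp_all add: binomial_eq_0 flip: power_add)
    show "of_nat ((n+k) choose (2*k)) * of_nat (catalan k) * u^k * (b - u)^(n-k)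
        = (\<Sum>t<n. of_nat (n choose Suc t) / of_nat n * u^t *
            (of_nat (n choose k) * of_nat (k choose t) * u^(k-t) * (b - u)^(n-k)))"
      using add_choose_Suc_eq_sum[of n k] assms
      unfolding choose_mult_catalan_eq_narayana[OF assms]
      by (simp add: sum_distrib_left sum_distrib_right sum_divide_distrib)
        (simp add: of_nat_sum ac_simps split_power)
  qed
  also have "\<dots> = (\<Sum>t<n. of_nat (n choose Suc t) / of_nat n * u^t *
            (\<Sum>k\<le>n. of_nat (n choose k) * of_nat (k choose t) * u^(k-t) * (b - u)^(n-k)))"
    by (simp add: sum.swap[of _ "{..n}"] sum_distrib_left)
  also have "\<dots> = narayana_poly n u b"
    unfolding sum_choose_mult_choose_power narayana_poly_def by (simp add: algebra_simps)
  finally show ?thesis .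
qed

lemma motzkin_mult_power_eq_sum:
  assumes "k \<le> m"
  shows "motzkin a b k * x^k
       = (\<Sum>j\<le>m. of_nat (catalan j) * (b*x^2)^j * (of_nat (k choose (2*j)) * (a*x)^(k-2*j)))"
proof -
  have "motzkin a b k * x^k
      = (\<Sum>j\<le>k div 2. of_nat (catalan j) * (b*x^2)^j * (of_nat (k choose (2*j)) * (a*x)^(k-2*j)))"
    unfolding motzkin_def atLeast0AtMost sum_distrib_right
  proof (rule sum.cong[OF refl])
    fix j assume "j \<in> {..k div 2}"
    then have "2*j \<le> k"
      by auto
    then have "x^k = (x^2)^j * x^(k-2*j)"
      by (metis le_add_diff_inverse power_add power_mult)
    then show "of_nat (k choose (2*j)) * of_nat (catalan j) * a^(k-2*j) * b^j * x^k
             = of_nat (catalan j) * (b*x^2)^j * (of_nat (k choose (2*j)) * (a*x)^(k-2*j))"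
      by (simp add: power_mult_distrib algebra_simps)
  qed
  also have "\<dots> = (\<Sum>j\<le>m. of_nat (catalan j) * (b*x^2)^j * (of_nat (k choose (2*j)) * (a*x)^(k-2*j)))"
    using assms by (intro sum.mono_neutral_left) auto
  finally show ?thesis .
qed

lemma sum_choose_motzkin_power:
  "(\<Sum>k\<le>m. of_nat (m choose k) * motzkin a b k * x^k * c^(m-k))
     = (\<Sum>j\<le>m. of_nat (m choose (2*j)) * of_nat (catalan j) * (b*x^2)^j * (a*x + c)^(m-2*j))"
proof -
  have "(\<Sum>k\<le>m. of_nat (m choose k) * motzkin a b k * x^k * c^(m-k))
      = (\<Sum>k\<le>m. \<Sum>j\<le>m. of_nat (catalan j) * (b*x^2)^j *
            (of_nat (m choose k) * of_nat (k choose (2*j)) * (a*x)^(k-2*j) * c^(m-k)))"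
  proof (rule sum.cong[OF refl])
    fix k assume "k \<in> {..m}"
    then show "of_nat (m choose k) * motzkin a b k * x^k * c^(m-k)
        = (\<Sum>j\<le>m. of_nat (catalan j) * (b*x^2)^j *
            (of_nat (m choose k) * of_nat (k choose (2*j)) * (a*x)^(k-2*j) * c^(m-k)))"
      using motzkin_mult_power_eq_sum[of k m a b x]
      by (simp add: mult.assoc sum_distrib_left sum_distrib_right) (simp add: algebra_simps)
  qed
  also have "\<dots> = (\<Sum>j\<le>m. of_nat (catalan j) * (b*x^2)^j *
            (\<Sum>k\<le>m. of_nat (m choose k) * of_nat (k choose (2*j)) * (a*x)^(k-2*j) * c^(m-k)))"
    unfolding sum_distrib_left by (rule sum.swap)
  finally show ?thesis
    unfolding sum_choose_mult_choose_power by (simp add: ac_simps)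
qed

text \<open>For \<open>u = b = 1\<close> this is Touchard's identity
  \<open>C\<^sub>m\<^sub>+\<^sub>1 = (\<Sum>j. (m choose 2j) C\<^sub>j 2\<^sup>m\<^sup>-\<^sup>2\<^sup>j)\<close>.\<close>

lemma catalan_trinomial_sum_eq_narayana_poly:
  fixes u b :: "'a::field_char_0"
  shows "b * (\<Sum>j\<le>m. of_nat (m choose (2*j)) * of_nat (catalan j) * (u*b)^j * (u + b)^(m-2*j))
       = narayana_poly (Suc m) u b"
proof -
  have "(\<Sum>j\<le>m. of_nat (m choose (2*j)) * of_nat (catalan j) * (u*b)^j * (u + b)^(m-2*j))
      = (\<Sum>j\<le>m. (\<Sum>i\<le>m. of_nat ((m choose i) * (i choose j) * ((m-i) choose j)) * u^i * b^(m-i))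
                  / of_nat (Suc j))"
    unfolding sum_choose_trinomial_power
  proof (rule sum.cong[OF refl])
    fix j
    have "of_nat (m choose (2*j)) * of_nat (catalan j) * (u*b)^j * (u + b)^(m-2*j)
        = of_nat ((m choose j) * ((m-j) choose j)) / of_nat (Suc j) * ((u*b)^j * (u + b)^(m-2*j))"
      by (simp only: choose_mult_catalan_eq_trinomial mult.assoc)
    then show "of_nat (m choose (2*j)) * of_nat (catalan j) * (u*b)^j * (u + b)^(m-2*j)
        = of_nat ((m choose j) * ((m-j) choose j)) * (u*b)^j * (u + b)^(m-2*j) / of_nat (Suc j)"
      by (simp add: ac_simps)
  qed
  also have "\<dots> = (\<Sum>i\<le>m. of_nat (m choose i) *
                     (\<Sum>j\<le>m. of_nat ((i choose j) * ((m-i) choose j)) / of_nat (Suc j)) * u^i * b^(m-i))"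
    unfolding sum_divide_distrib
    by (subst sum.swap) (simp add: sum_distrib_left sum_distrib_right ac_simps)
  also have "\<dots> = (\<Sum>i\<le>m. of_nat ((Suc m choose i) * (Suc m choose Suc i)) / of_nat (Suc m) * u^i * b^(m-i))"
    by (intro sum.cong refl) (simp only: atMost_iff choose_mult_sum_choose_choose_div_Suc)
  finally have "b * (\<Sum>j\<le>m. of_nat (m choose (2*j)) * of_nat (catalan j) * (u*b)^j * (u + b)^(m-2*j))
      = (\<Sum>i\<le>m. b * (of_nat ((Suc m choose i) * (Suc m choose Suc i)) / of_nat (Suc m) * u^i * b^(m-i)))"
    by (simp only: sum_distrib_left)
  also have "\<dots> = narayana_poly (Suc m) u b"
    unfolding narayana_poly_def lessThan_Suc_atMost
    by (intro sum.cong refl) (simp add: Suc_diff_le)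
  finally show ?thesis .
qed

theorem theorem1p2:
  fixes n :: nat and a b x :: complex
  assumes "n \<ge> 1"
  shows "(\<Sum>k=0..n. of_nat ((n+k) choose (2*k)) * of_nat (catalan k) * x^(2*k) * (b - x^2)^(n-k))
       = b * (\<Sum>k=0..n-1. of_nat ((n-1) choose k) * motzkin a b k * x^k * (x^2 - a*x + b)^(n-1-k))"
proof -
  obtain m where n: "n = Suc m"
    using assms by (cases n) auto
  have "(\<Sum>k=0..n. of_nat ((n+k) choose (2*k)) * of_nat (catalan k) * x^(2*k) * (b - x^2)^(n-k))
      = (\<Sum>k\<le>n. of_nat ((n+k) choose (2*k)) * of_nat (catalan k) * (x^2)^k * (b - x^2)^(n-k))"
    by (simp add: atLeast0AtMost power_mult)
  also have "\<dots> = narayana_poly n (x^2) b"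
    by (rule catalan_sum_eq_narayana_poly[OF assms])
  also have "\<dots> = b * (\<Sum>j\<le>m. of_nat (m choose (2*j)) * of_nat (catalan j)
                          * (x^2*b)^j * (x^2 + b)^(m-2*j))"
    unfolding n by (rule catalan_trinomial_sum_eq_narayana_poly[symmetric])
  also have "\<dots> = b * (\<Sum>k\<le>m. of_nat (m choose k) * motzkin a b k * x^k * (x^2 - a*x + b)^(m-k))"
    unfolding sum_choose_motzkin_power by (simp add: ac_simps)
  finally show ?thesis
    by (simp add: n atLeast0AtMost)
qed

end
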